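(* Let $p,n$ be positive integers, $c=\gcd(p,n)$, $d=n/c$, $y\in\mathbb{Z}_n$, and let $\alpha_k$ ($0\le k\le c-1$) be defined by $\alpha_k(x_i)\equiv y+L(i-1)\,kd\pmod n$, $i=1,\dots,p+1$, where $L(m)$ is the least nonnegative residue of $m$ modulo $p$. Then $\hom(P(\widetilde{\mathcal{T}(p,2)}),(\mathbb{Z}_n,y,y))=\{\alpha_0,\dots,\alpha_{c-1}\}$, these $c$ homomorphisms are pairwise distinct, and hence the pointed quandle counting invariant is $\Phi^{\mathbb{Z}}_{(\mathbb{Z}_n,y,y)}(\widetilde{\mathcal{T}(p,2)})=|\hom(P(\widetilde{\mathcal{T}(p,2)}),(\mathbb{Z}_n,y,y))|=c$.
   Context: $\mathbb{Z}_n$ is the dihedral quandle ($x\triangleright y=2y-x$ mod $n$); $(\mathbb{Z}_n,y,y)$ is the $2$-pointed quandle with both basepoints $y$. $P(\widetilde{\mathcal{T}(p,2)})=(Q,x_1,x_{p+1})$ with $Q=\langle x_1,\dots,x_{p+1}\mid x_p=x_2\triangleright x_{p+1},\ x_i=x_{i+2}\triangleright x_{i+1}\ (1\le i\le p-1)\rangle$, the fundamental pointed quandle of the $1$-linkoid of $(p,2)$-torus type; $\hom$ denotes basepoint-preserving quandle homomorphisms. *)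

theory Defs
  imports Main
begin

datatype 'g qterm = Gen 'g | Tri "'g qterm" "'g qterm" | TriInv "'g qterm" "'g qterm"

fun gens :: "'g qterm \<Rightarrow> 'g set" where
  "gens (Gen g) = {g}"
| "gens (Tri a b) = gens a \<union> gens b"
| "gens (TriInv a b) = gens a \<union> gens b"

inductive qcong :: "('g qterm \<times> 'g qterm) set \<Rightarrow> 'g qterm \<Rightarrow> 'g qterm \<Rightarrow> bool"
  for R where
  refl: "qcong R a a"
| sym: "qcong R a b \<Longrightarrow> qcong R b a"
| trans: "qcong R a b \<Longrightarrow> qcong R b c \<Longrightarrow> qcong R a c"
| cong_tri: "qcong R a a' \<Longrightarrow> qcong R b b' \<Longrightarrow> qcong R (Tri a b) (Tri a' b')"
| cong_triinv: "qcong R a a' \<Longrightarrow> qcong R b b' \<Longrightarrow> qcong R (TriInv a b) (TriInv a' b')"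
| idem: "qcong R (Tri a a) a"
| rinv1: "qcong R (TriInv (Tri a b) b) a"
| rinv2: "qcong R (Tri (TriInv a b) b) a"
| selfdist: "qcong R (Tri (Tri a b) c) (Tri (Tri a c) (Tri b c))"
| rel: "(a, b) \<in> R \<Longrightarrow> qcong R a b"

definition qclass :: "('g qterm \<times> 'g qterm) set \<Rightarrow> 'g qterm \<Rightarrow> 'g qterm set" where
  "qclass R t = {s. qcong R t s}"

definition pq_carrier :: "('g qterm \<times> 'g qterm) set \<Rightarrow> 'g set \<Rightarrow> 'g qterm set set" where
  "pq_carrier R G = {qclass R t | t. gens t \<subseteq> G}"

text \<open>Basepoint-preserving quandle homomorphisms from the 2-pointed presented quandle
  (\<langle>G | R\<rangle>, g1, g2) to the 2-pointed quandle (T, tri, y1, y2); maps are extensional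
  (undefined outside the carrier).\<close>
definition pointed_qhom ::
  "('g qterm \<times> 'g qterm) set \<Rightarrow> 'g set \<Rightarrow> 'g \<Rightarrow> 'g \<Rightarrow> 'b set \<Rightarrow> ('b \<Rightarrow> 'b \<Rightarrow> 'b)
   \<Rightarrow> 'b \<Rightarrow> 'b \<Rightarrow> ('g qterm set \<Rightarrow> 'b) set" where
  "pointed_qhom R G g1 g2 T tri y1 y2 =
    {h. (\<forall>C\<in>pq_carrier R G. h C \<in> T)
      \<and> (\<forall>C. C \<notin> pq_carrier R G \<longrightarrow> h C = undefined)
      \<and> (\<forall>a b. gens a \<subseteq> G \<longrightarrow> gens b \<subseteq> G \<longrightarrow>
              h (qclass R (Tri a b)) = tri (h (qclass R a)) (h (qclass R b)))
      \<and> h (qclass R (Gen g1)) = y1 \<and> h (qclass R (Gen g2)) = y2}"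

fun qeval :: "('b \<Rightarrow> 'b \<Rightarrow> 'b) \<Rightarrow> ('b \<Rightarrow> 'b \<Rightarrow> 'b) \<Rightarrow> ('g \<Rightarrow> 'b) \<Rightarrow> 'g qterm \<Rightarrow> 'b" where
  "qeval tri tinv v (Gen g) = v g"
| "qeval tri tinv v (Tri a b) = tri (qeval tri tinv v a) (qeval tri tinv v b)"
| "qeval tri tinv v (TriInv a b) = tinv (qeval tri tinv v a) (qeval tri tinv v b)"

definition ext_hom ::
  "('g qterm \<times> 'g qterm) set \<Rightarrow> 'g set \<Rightarrow> ('b \<Rightarrow> 'b \<Rightarrow> 'b) \<Rightarrow> ('b \<Rightarrow> 'b \<Rightarrow> 'b)
   \<Rightarrow> ('g \<Rightarrow> 'b) \<Rightarrow> 'g qterm set \<Rightarrow> 'b" where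
  "ext_hom R G tri tinv v = (\<lambda>C. if C \<in> pq_carrier R G
      then qeval tri tinv v (SOME t. gens t \<subseteq> G \<and> C = qclass R t) else undefined)"

definition dcarrier :: "nat \<Rightarrow> int set" where
  "dcarrier n = {0..<int n}"

definition dtri :: "nat \<Rightarrow> int \<Rightarrow> int \<Rightarrow> int" where
  "dtri n x y = (2 * y - x) mod int n"

definition torus_rels :: "nat \<Rightarrow> (nat qterm \<times> nat qterm) set" where
  "torus_rels p = {(Gen p, Tri (Gen 2) (Gen (p + 1)))}
     \<union> {(Gen i, Tri (Gen (i + 2)) (Gen (i + 1))) | i. 1 \<le> i \<and> i \<le> p - 1}"

definition torus_gens :: "nat \<Rightarrow> nat set" where
  "torus_gens p = {1..p + 1}"

end

theory Submission
  imports Defs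
begin

text \<open>In the dihedral quandle the relation \<open>x\<^sub>i = x\<^sub>i\<^sub>+\<^sub>2 \<triangleright> x\<^sub>i\<^sub>+\<^sub>1\<close> says
  \<open>x\<^sub>i\<^sub>+\<^sub>2 = 2x\<^sub>i\<^sub>+\<^sub>1 - x\<^sub>i\<close>, so the images of the generators under a homomorphism with
  \<open>x\<^sub>1 \<mapsto> y\<close> form an arithmetic progression \<open>y + (i - 1)t\<close> mod n. The remaining relation and
  the second basepoint \<open>x\<^sub>p\<^sub>+\<^sub>1 \<mapsto> y\<close> hold exactly when \<open>n | pt\<close>, i.e. when \<open>d = n/c\<close>
  divides t, leaving the c residues \<open>t = kd\<close>; and a homomorphism of a presented quandle is
  determined by the images of the generators.\<close>

definition quandle_on :: "'b set \<Rightarrow> ('b \<Rightarrow> 'b \<Rightarrow> 'b) \<Rightarrow> ('b \<Rightarrow> 'b \<Rightarrow> 'b) \<Rightarrow> bool" where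
  "quandle_on T tri tinv \<longleftrightarrow>
     (\<forall>x\<in>T. \<forall>y\<in>T. tri x y \<in> T \<and> tinv x y \<in> T)
   \<and> (\<forall>x\<in>T. tri x x = x)
   \<and> (\<forall>x\<in>T. \<forall>y\<in>T. tinv (tri x y) y = x \<and> tri (tinv x y) y = x)
   \<and> (\<forall>x\<in>T. \<forall>y\<in>T. \<forall>z\<in>T. tri (tri x y) z = tri (tri x z) (tri y z))"

context
  fixes T tri tinv assumes Q: "quandle_on T tri tinv"
begin

lemma quandle_on_closed: "x \<in> T \<Longrightarrow> y \<in> T \<Longrightarrow> tri x y \<in> T"
  and quandle_on_idem: "x \<in> T \<Longrightarrow> tri x x = x"
  and quandle_on_tinv_tri: "x \<in> T \<Longrightarrow> y \<in> T \<Longrightarrow> tinv (tri x y) y = x"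
  and quandle_on_tri_tinv: "x \<in> T \<Longrightarrow> y \<in> T \<Longrightarrow> tri (tinv x y) y = x"
  and quandle_on_inv_closed: "x \<in> T \<Longrightarrow> y \<in> T \<Longrightarrow> tinv x y \<in> T"
  and quandle_on_self_distrib:
    "x \<in> T \<Longrightarrow> y \<in> T \<Longrightarrow> z \<in> T \<Longrightarrow> tri (tri x y) z = tri (tri x z) (tri y z)"
  using Q unfolding quandle_on_def by blast+

end

lemma qclass_eq_iff: "qclass R a = qclass R b \<longleftrightarrow> qcong R a b"
proof
  assume "qclass R a = qclass R b"
  then show "qcong R a b" using qcong.refl[of R b] by (auto simp: qclass_def)
next
  assume "qcong R a b"
  then show "qclass R a = qclass R b"
    unfolding qclass_def using qcong.sym qcong.trans by blast
qed

lemma qeval_in: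
  assumes "quandle_on T tri tinv" "\<forall>g. v g \<in> T"
  shows "qeval tri tinv v t \<in> T"
  using assms by (induction t) (auto intro: quandle_on_closed quandle_on_inv_closed)

lemma qeval_qcong:
  assumes "qcong R s t" and T: "quandle_on T tri tinv" "\<forall>g. v g \<in> T"
    and R: "\<forall>(a, b)\<in>R. qeval tri tinv v a = qeval tri tinv v b"
  shows "qeval tri tinv v s = qeval tri tinv v t"
  using assms(1)
proof induction
  case (rel a b)
  then show ?case using R by auto
next
  case (idem a)
  show ?case by (simp add: quandle_on_idem[OF T(1) qeval_in[OF T]])
next
  case (rinv1 a b)
  show ?case by (simp add: quandle_on_tinv_tri[OF T(1) qeval_in[OF T] qeval_in[OF T]])
next
  case (rinv2 a b)
  show ?case by (simp add: quandle_on_tri_tinv[OF T(1) qeval_in[OF T] qeval_in[OF T]])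
next
  case (selfdist a b c)
  show ?case
    by (simp only: qeval.simps) (intro quandle_on_self_distrib[OF T(1)] qeval_in[OF T])
qed simp_all

lemma ext_hom_qclass:
  assumes T: "quandle_on T tri tinv" "\<forall>g. v g \<in> T"
    and R: "\<forall>(a, b)\<in>R. qeval tri tinv v a = qeval tri tinv v b"
    and "gens t \<subseteq> G"
  shows "ext_hom R G tri tinv v (qclass R t) = qeval tri tinv v t"
proof -
  define s where "s = (SOME s. gens s \<subseteq> G \<and> qclass R t = qclass R s)"
  have "gens s \<subseteq> G \<and> qclass R t = qclass R s"
    unfolding s_def by (rule someI[of _ t]) (use assms(4) in simp)
  then have "qeval tri tinv v t = qeval tri tinv v s"
    by (intro qeval_qcong[OF _ T R]) (simp add: qclass_eq_iff)
  moreover have "qclass R t \<in> pq_carrier R G"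
    using assms(4) by (auto simp: pq_carrier_def)
  ultimately show ?thesis by (simp add: ext_hom_def s_def)
qed

lemma ext_hom_in_pointed_qhom:
  assumes T: "quandle_on T tri tinv" "\<forall>g. v g \<in> T"
    and R: "\<forall>(a, b)\<in>R. qeval tri tinv v a = qeval tri tinv v b"
    and "g1 \<in> G" "g2 \<in> G" "v g1 = y1" "v g2 = y2"
  shows "ext_hom R G tri tinv v \<in> pointed_qhom R G g1 g2 T tri y1 y2"
proof -
  note eval = ext_hom_qclass[OF T R]
  have "ext_hom R G tri tinv v C \<in> T" if "C \<in> pq_carrier R G" for C
    using that eval qeval_in[OF T] by (auto simp: pq_carrier_def)
  moreover have "ext_hom R G tri tinv v C = undefined" if "C \<notin> pq_carrier R G" for C
    using that by (simp add: ext_hom_def)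
  moreover have "ext_hom R G tri tinv v (qclass R (Tri a b))
      = tri (ext_hom R G tri tinv v (qclass R a)) (ext_hom R G tri tinv v (qclass R b))"
    if "gens a \<subseteq> G" "gens b \<subseteq> G" for a b
    using that by (simp add: eval)
  moreover have "ext_hom R G tri tinv v (qclass R (Gen g1)) = y1"
    "ext_hom R G tri tinv v (qclass R (Gen g2)) = y2"
    using assms(4-) by (simp_all add: eval)
  ultimately show ?thesis
    unfolding pointed_qhom_def by blast
qed

lemma pointed_qhom_in:
  "h \<in> pointed_qhom R G g1 g2 T tri y1 y2 \<Longrightarrow> gens t \<subseteq> G \<Longrightarrow> h (qclass R t) \<in> T"
  unfolding pointed_qhom_def pq_carrier_def by blast

lemma pointed_qhom_Tri:
  "h \<in> pointed_qhom R G g1 g2 T tri y1 y2 \<Longrightarrow> gens a \<subseteq> G \<Longrightarrow> gens b \<subseteq> G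
    \<Longrightarrow> h (qclass R (Tri a b)) = tri (h (qclass R a)) (h (qclass R b))"
  unfolding pointed_qhom_def by blast

lemma pointed_qhom_basepoints:
  "h \<in> pointed_qhom R G g1 g2 T tri y1 y2
    \<Longrightarrow> h (qclass R (Gen g1)) = y1 \<and> h (qclass R (Gen g2)) = y2"
  unfolding pointed_qhom_def by blast

lemma pointed_qhom_eq_ext_hom:
  assumes T: "quandle_on T tri tinv" "\<forall>g. v g \<in> T"
    and R: "\<forall>(a, b)\<in>R. qeval tri tinv v a = qeval tri tinv v b"
    and h: "h \<in> pointed_qhom R G g1 g2 T tri y1 y2"
    and gens: "\<forall>g\<in>G. h (qclass R (Gen g)) = v g"
  shows "h = ext_hom R G tri tinv v"
proof
  have h_eval: "h (qclass R t) = qeval tri tinv v t" if "gens t \<subseteq> G" for t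
    using that
  proof (induction t)
    case (Gen g)
    then show ?case using gens by simp
  next
    case (Tri a b)
    then show ?case using pointed_qhom_Tri[OF h] by simp
  next
    case (TriInv a b)
    \<comment> \<open>only \<open>\<triangleright>\<close> is required to be preserved; \<open>\<triangleright>\<inverse>\<close> is then forced by \<open>a = (a \<triangleright>\<inverse> b) \<triangleright> b\<close>\<close>
    have "qclass R a = qclass R (Tri (TriInv a b) b)"
      by (simp add: qclass_eq_iff qcong.sym qcong.rinv2)
    then have "h (qclass R a) = tri (h (qclass R (TriInv a b))) (h (qclass R b))"
      using TriInv.prems pointed_qhom_Tri[OF h] by simp
    then have "h (qclass R (TriInv a b)) = tinv (h (qclass R a)) (h (qclass R b))"
      using quandle_on_tinv_tri[OF T(1)] pointed_qhom_in[OF h] TriInv.prems by simp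
    with TriInv show ?case by simp
  qed
  fix C
  show "h C = ext_hom R G tri tinv v C"
  proof (cases "C \<in> pq_carrier R G")
    case True
    then obtain t where "gens t \<subseteq> G" "C = qclass R t" by (auto simp: pq_carrier_def)
    then show ?thesis using h_eval ext_hom_qclass[OF T R] by simp
  next
    case False
    then show ?thesis using h by (simp add: pointed_qhom_def ext_hom_def)
  qed
qed

lemma dtri_mod_mod: "dtri n (x mod int n) (z mod int n) = dtri n x z"
proof -
  have "(2 * (z mod int n) - x mod int n) mod int n = (2 * (z mod int n) - x) mod int n"
    by (rule mod_diff_right_eq)
  also have "\<dots> = (2 * z - x) mod int n"
    by (metis mod_diff_left_eq mod_mult_right_eq)
  finally show ?thesis by (simp only: dtri_def)
qed

lemma dtri_dtri: "x \<in> dcarrier n \<Longrightarrow> dtri n (dtri n x z) z = x"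
  by (simp add: dtri_def dcarrier_def mod_diff_right_eq)

lemma quandle_on_dihedral:
  assumes "0 < n" shows "quandle_on (dcarrier n) (dtri n) (dtri n)"
proof -
  have closed: "dtri n x z \<in> dcarrier n" for x z
    using assms by (simp add: dtri_def dcarrier_def)
  have idem: "dtri n x x = x" if "x \<in> dcarrier n" for x
    using that by (simp add: dtri_def dcarrier_def)
  have self_distrib: "dtri n (dtri n x z) w = dtri n (dtri n x w) (dtri n z w)" for x z w
  proof -
    have "dtri n (dtri n x w) (dtri n z w) = dtri n (2 * w - x) (2 * w - z)"
      unfolding dtri_def[of n x w] dtri_def[of n z w] by (rule dtri_mod_mod)
    also have "\<dots> = (2 * w - 2 * z + x) mod int n"
      by (simp add: dtri_def algebra_simps)
    also have "\<dots> = dtri n (dtri n x z) w"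
      by (simp add: dtri_def mod_diff_right_eq algebra_simps)
    finally show ?thesis ..
  qed
  show ?thesis
    unfolding quandle_on_def by (simp add: closed idem dtri_dtri) (metis self_distrib)
qed

lemma dihedral_recurrence_progression:
  assumes rec: "\<And>i. 1 \<le> i \<Longrightarrow> i + 2 \<le> m \<Longrightarrow> a (i + 2) = dtri n (a i) (a (i + 1))"
    and "a 1 \<in> dcarrier n" "a 2 \<in> dcarrier n"
    and "1 \<le> i" "i \<le> m"
  shows "a i = (a 1 + int (i - 1) * (a 2 - a 1)) mod int n"
  using assms(4,5)
proof (induction i rule: less_induct)
  case (less i)
  consider "i = 1" | "i = 2" | "3 \<le> i" using less.prems by linarith
  then show ?case
  proof cases
    case 3
    define j where "j = i - 2"
    have j: "i = j + 2" "1 \<le> j" using 3 by (simp_all add: j_def)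
    let ?t = "a 2 - a 1"
    have "a i = dtri n (a j) (a (j + 1))"
      using j less.prems rec[of j] by simp
    also have "\<dots> = dtri n ((a 1 + int (j - 1) * ?t) mod int n) ((a 1 + int j * ?t) mod int n)"
      using j less.prems less.IH[of j] less.IH[of "j + 1"] by simp
    also have "\<dots> = (a 1 + int (i - 1) * ?t) mod int n"
      unfolding dtri_mod_mod using j by (simp add: dtri_def of_nat_diff algebra_simps)
    finally show ?thesis .
  qed (use assms(2,3) in \<open>auto simp: dcarrier_def\<close>)
qed

lemma div_gcd_dvd_if_dvd_mult:
  fixes n p t :: int
  assumes "n \<noteq> 0" "n dvd p * t"
  shows "n div gcd p n dvd t"
proof -
  define g where "g = gcd p n"
  have g: "g \<noteq> 0" "p = g * (p div g)" "n = g * (n div g)"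
    using assms(1) by (simp_all add: g_def)
  have "g * (n div g) dvd g * ((p div g) * t)"
    using assms(2) g by (metis mult.assoc)
  then have "n div g dvd (p div g) * t" using g(1) by simp
  moreover have "coprime (n div g) (p div g)"
    using assms(1) div_gcd_coprime[of p n] by (simp add: g_def coprime_commute)
  ultimately show ?thesis by (simp add: g_def coprime_dvd_mult_right_iff)
qed

lemma dvd_mod_mult_representativeE:
  fixes t :: int and c d :: nat
  assumes "0 < c" "int d dvd t"
  obtains k where "k < c" "t mod int (c * d) = int (k * d) mod int (c * d)"
proof -
  obtain s where s: "t = int d * s" using assms(2) by (auto elim: dvdE)
  define k where "k = nat (s mod int c)"
  have "0 \<le> s mod int c" "s mod int c < int c" using assms(1) by simp_all
  then have k: "int k = s mod int c" "k < c" by (simp_all add: k_def nat_less_iff)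
  have "t - int (k * d) = int d * (s - s mod int c)"
    using s k(1) by (simp add: algebra_simps)
  also have "\<dots> = int (c * d) * (s div int c)"
    by (simp add: minus_mod_eq_mult_div)
  finally have "int (c * d) dvd t - int (k * d)" unfolding dvd_def by blast
  then have "t mod int (c * d) = int (k * d) mod int (c * d)"
    by (rule mod_eq_dvd_iff[THEN iffD2])
  with k(2) show thesis by (rule that)
qed

lemma mult_mod_mult_inj:
  fixes c d k k' :: nat
  assumes "0 < d" "k < c" "k' < c" "int (k * d) mod int (c * d) = int (k' * d) mod int (c * d)"
  shows "k = k'"
proof -
  have "k * d < c * d" "k' * d < c * d" using assms by simp_all
  then have "int (k * d) = int (k' * d)" using assms(4) by simp
  then show ?thesis using assms(1) by simp
qed

lemma dvd_mult_mult_div_gcd: "int n dvd int p * int (k * (n div gcd p n))"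
proof -
  have eq: "p * (k * (n div gcd p n)) = k * (p div gcd p n) * n"
    by (simp add: div_mult_swap algebra_simps)
  have "n dvd p * (k * (n div gcd p n))"
    unfolding eq by (rule dvd_triv_right)
  then show ?thesis by (simp only: of_nat_mult[symmetric] of_nat_dvd_iff)
qed

abbreviation torus_homs :: "nat \<Rightarrow> nat \<Rightarrow> int \<Rightarrow> (nat qterm set \<Rightarrow> int) set" where
  "torus_homs n p y \<equiv>
     pointed_qhom (torus_rels p) (torus_gens p) 1 (p + 1) (dcarrier n) (dtri n) y y"

abbreviation torus_ext_hom :: "nat \<Rightarrow> nat \<Rightarrow> (nat \<Rightarrow> int) \<Rightarrow> nat qterm set \<Rightarrow> int" where
  "torus_ext_hom n p v \<equiv> ext_hom (torus_rels p) (torus_gens p) (dtri n) (dtri n) v"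

definition torus_coloring :: "nat \<Rightarrow> nat \<Rightarrow> int \<Rightarrow> int \<Rightarrow> nat \<Rightarrow> int" where
  "torus_coloring n p y t i = (y + int ((i - 1) mod p) * t) mod int n"

lemma torus_coloring_in_dcarrier: "0 < n \<Longrightarrow> torus_coloring n p y t i \<in> dcarrier n"
  by (simp add: torus_coloring_def dcarrier_def)

lemma torus_coloring_cong:
  assumes "t mod int n = t' mod int n"
  shows "torus_coloring n p y t = torus_coloring n p y t'"
proof
  fix i
  let ?k = "int ((i - 1) mod p)"
  have "(y + ?k * t) - (y + ?k * t') = ?k * (t - t')" by (simp add: algebra_simps)
  moreover have "int n dvd t - t'" using assms by (simp add: mod_eq_dvd_iff)
  ultimately have "int n dvd (y + ?k * t) - (y + ?k * t')" by simp
  then show "torus_coloring n p y t i = torus_coloring n p y t' i"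
    by (simp add: torus_coloring_def mod_eq_dvd_iff)
qed

lemma torus_coloring_progression:
  assumes "int n dvd int p * t" "1 \<le> i" "i \<le> p + 1"
  shows "torus_coloring n p y t i = (y + int (i - 1) * t) mod int n"
proof (cases "i = p + 1")
  case True
  have "(y + int p * t) mod int n = y mod int n"
    using assms(1) by (simp add: mod_eq_dvd_iff)
  with True show ?thesis by (simp add: torus_coloring_def)
qed (use assms in \<open>simp add: torus_coloring_def\<close>)

lemma torus_coloring_respects_rels:
  assumes "0 < p" "int n dvd int p * t"
  shows "\<forall>(a, b)\<in>torus_rels p. qeval (dtri n) (dtri n) (torus_coloring n p y t) a
                             = qeval (dtri n) (dtri n) (torus_coloring n p y t) b"
proof -
  let ?v = "torus_coloring n p y t"
  have val: "?v i = (y + int (i - 1) * t) mod int n" if "1 \<le> i" "i \<le> p + 1" for i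
    using torus_coloring_progression[OF assms(2) that] .
  have first: "?v p = dtri n (?v 2) (?v (p + 1))"
  proof -
    have diff: "(y + int (p - 1) * t) - (2 * (y + int p * t) - (y + t)) = - (int p * t)"
      using assms(1) by (simp add: of_nat_diff algebra_simps)
    have "int n dvd (y + int (p - 1) * t) - (2 * (y + int p * t) - (y + t))"
      unfolding diff using assms(2) by simp
    then have "(y + int (p - 1) * t) mod int n = dtri n (y + t) (y + int p * t)"
      unfolding dtri_def by (rule mod_eq_dvd_iff[THEN iffD2])
    then show ?thesis
      using assms(1) val[of p] val[of 2] val[of "p + 1"] by (simp add: dtri_mod_mod)
  qed
  have step: "?v i = dtri n (?v (i + 2)) (?v (i + 1))" if "1 \<le> i" "i \<le> p - 1" for i
  proof -
    have "(y + int (i - 1) * t) mod int n = dtri n (y + int (i + 1) * t) (y + int i * t)"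
      using that by (simp add: dtri_def of_nat_diff algebra_simps)
    then show ?thesis
      using that val[of i] val[of "i + 1"] val[of "i + 2"] by (simp add: dtri_mod_mod)
  qed
  show ?thesis
    unfolding torus_rels_def using first step by auto
qed

lemma torus_ext_hom_coloring_in_homs:
  assumes "0 < p" "0 < n" "y \<in> dcarrier n" "int n dvd int p * t"
  shows "torus_ext_hom n p (torus_coloring n p y t) \<in> torus_homs n p y"
proof (rule ext_hom_in_pointed_qhom[OF quandle_on_dihedral[OF assms(2)]])
  show "\<forall>i. torus_coloring n p y t i \<in> dcarrier n"
    using assms(2) by (simp add: torus_coloring_in_dcarrier)
  show "torus_coloring n p y t 1 = y" "torus_coloring n p y t (p + 1) = y"
    using assms(3) by (simp_all add: torus_coloring_def dcarrier_def)
  show "1 \<in> torus_gens p" "p + 1 \<in> torus_gens p"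
    by (simp_all add: torus_gens_def)
qed (rule torus_coloring_respects_rels[OF assms(1,4)])

lemma torus_homs_ext_hom_coloringE:
  assumes "0 < p" "0 < n" "h \<in> torus_homs n p y"
  obtains t where "int n dvd int p * t" "h = torus_ext_hom n p (torus_coloring n p y t)"
proof -
  define a where "a i = h (qclass (torus_rels p) (Gen i))" for i
  have a_in: "a i \<in> dcarrier n" if "1 \<le> i" "i \<le> p + 1" for i
    unfolding a_def using pointed_qhom_in[OF assms(3)] that by (simp add: torus_gens_def)
  have a_ends: "a 1 = y" "a (p + 1) = y"
    unfolding a_def using pointed_qhom_basepoints[OF assms(3)] by simp_all
  have a_rec: "a (i + 2) = dtri n (a i) (a (i + 1))" if "1 \<le> i" "i + 2 \<le> p + 1" for i
  proof -
    have "qclass (torus_rels p) (Gen i) = qclass (torus_rels p) (Tri (Gen (i + 2)) (Gen (i + 1)))"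
      using that by (auto simp: qclass_eq_iff torus_rels_def intro: qcong.rel)
    then have "a i = dtri n (a (i + 2)) (a (i + 1))"
      unfolding a_def using pointed_qhom_Tri[OF assms(3)] that by (simp add: torus_gens_def)
    then show ?thesis using dtri_dtri a_in that by simp
  qed
  define t where "t = a 2 - y"
  have a_prog: "a i = (y + int (i - 1) * t) mod int n" if "1 \<le> i" "i \<le> p + 1" for i
    using dihedral_recurrence_progression[of "p + 1" a n i] a_rec a_in a_ends assms(1) that
    by (simp add: t_def)
  have dvd: "int n dvd int p * t"
  proof -
    have "(y + int p * t) mod int n = y mod int n"
      using a_prog[of "p + 1"] a_ends(2) a_in[of 1] a_ends(1) by (simp add: dcarrier_def)
    then show ?thesis by (simp add: mod_eq_dvd_iff)
  qed
  have "h = torus_ext_hom n p (torus_coloring n p y t)"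
  proof (rule pointed_qhom_eq_ext_hom[OF quandle_on_dihedral[OF assms(2)] _ _ assms(3)])
    show "\<forall>i. torus_coloring n p y t i \<in> dcarrier n"
      using assms(2) by (simp add: torus_coloring_in_dcarrier)
    show "\<forall>i\<in>torus_gens p. h (qclass (torus_rels p) (Gen i)) = torus_coloring n p y t i"
      using a_prog torus_coloring_progression[OF dvd] by (simp add: torus_gens_def a_def)
  qed (rule torus_coloring_respects_rels[OF assms(1) dvd])
  with dvd show thesis by (rule that)
qed

lemma torus_ext_hom_coloring_Gen:
  assumes "0 < p" "0 < n" "int n dvd int p * t" "i \<in> torus_gens p"
  shows "torus_ext_hom n p (torus_coloring n p y t) (qclass (torus_rels p) (Gen i))
    = torus_coloring n p y t i"
proof -
  have "\<forall>i. torus_coloring n p y t i \<in> dcarrier n"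
    using assms(2) by (simp add: torus_coloring_in_dcarrier)
  from ext_hom_qclass[OF quandle_on_dihedral[OF assms(2)] this
      torus_coloring_respects_rels[OF assms(1,3)], of "Gen i"]
  show ?thesis using assms(4) by simp
qed

lemma torus_ext_hom_coloring_eq_iff:
  assumes "2 \<le> p" "0 < n" "int n dvd int p * t" "int n dvd int p * t'"
  shows "torus_ext_hom n p (torus_coloring n p y t) = torus_ext_hom n p (torus_coloring n p y t')
     \<longleftrightarrow> t mod int n = t' mod int n"
proof
  assume eq: "torus_ext_hom n p (torus_coloring n p y t) = torus_ext_hom n p (torus_coloring n p y t')"
  have p: "0 < p" "2 \<in> torus_gens p" using assms(1) by (simp_all add: torus_gens_def)
  have "torus_coloring n p y t 2
      = torus_ext_hom n p (torus_coloring n p y t) (qclass (torus_rels p) (Gen 2))"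
    using torus_ext_hom_coloring_Gen[OF p(1) assms(2,3) p(2)] by simp
  also have "\<dots> = torus_coloring n p y t' 2"
    unfolding eq using torus_ext_hom_coloring_Gen[OF p(1) assms(2,4) p(2)] by simp
  finally have "(y + t) mod int n = (y + t') mod int n"
    using assms(1) by (simp add: torus_coloring_def)
  then show "t mod int n = t' mod int n" by (simp add: mod_eq_dvd_iff)
next
  assume "t mod int n = t' mod int n"
  then show "torus_ext_hom n p (torus_coloring n p y t) = torus_ext_hom n p (torus_coloring n p y t')"
    by (intro arg_cong[where f = "torus_ext_hom n p"] torus_coloring_cong)
qed

lemma torus_homs_eq_image:
  assumes "0 < p" "0 < n" "y \<in> dcarrier n"
  defines "d \<equiv> n div gcd p n"
  shows "torus_homs n p y
    = (\<lambda>k. torus_ext_hom n p (torus_coloring n p y (int (k * d)))) ` {0..<gcd p n}"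
    (is "_ = ?\<alpha> ` _")
proof
  note dvd = dvd_mult_mult_div_gcd[of n p, folded d_def]
  show "?\<alpha> ` {0..<gcd p n} \<subseteq> torus_homs n p y"
    using torus_ext_hom_coloring_in_homs[OF assms(1-3) dvd] by auto
  show "torus_homs n p y \<subseteq> ?\<alpha> ` {0..<gcd p n}"
  proof
    fix h assume "h \<in> torus_homs n p y"
    then obtain t where t: "int n dvd int p * t" "h = torus_ext_hom n p (torus_coloring n p y t)"
      by (rule torus_homs_ext_hom_coloringE[OF assms(1,2)])
    have "int n div gcd (int p) (int n) = int d" by (simp add: d_def zdiv_int)
    then have "int d dvd t" using div_gcd_dvd_if_dvd_mult[OF _ t(1)] assms(2) by simp
    moreover have "0 < gcd p n" using assms(1) by simp
    ultimately obtain k where k: "k < gcd p n"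
      "t mod int (gcd p n * d) = int (k * d) mod int (gcd p n * d)"
      using dvd_mod_mult_representativeE by blast
    have n: "n = gcd p n * d" by (simp add: d_def)
    have "h = ?\<alpha> k"
      unfolding t(2)
      by (intro arg_cong[where f = "torus_ext_hom n p"] torus_coloring_cong k(2)[folded n])
    with k(1) show "h \<in> ?\<alpha> ` {0..<gcd p n}" by simp
  qed
qed

lemma inj_on_torus_ext_hom_coloring:
  assumes "0 < p" "0 < n"
  defines "d \<equiv> n div gcd p n"
  shows "inj_on (\<lambda>k. torus_ext_hom n p (torus_coloring n p y (int (k * d)))) {0..<gcd p n}"
proof (cases "p = 1")
  case False
  then have p: "2 \<le> p" using assms(1) by simp
  have n: "n = gcd p n * d" by (simp add: d_def)
  then have d: "0 < d" using assms(2) by (cases "d = 0") auto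
  note dvd = dvd_mult_mult_div_gcd[of n p, folded d_def]
  show ?thesis
  proof (rule inj_onI)
    fix k k' assume k: "k \<in> {0..<gcd p n}" "k' \<in> {0..<gcd p n}"
      and "torus_ext_hom n p (torus_coloring n p y (int (k * d)))
         = torus_ext_hom n p (torus_coloring n p y (int (k' * d)))"
    then have "int (k * d) mod int n = int (k' * d) mod int n"
      unfolding torus_ext_hom_coloring_eq_iff[OF p assms(2) dvd dvd] by blast
    then have "int (k * d) mod int (gcd p n * d) = int (k' * d) mod int (gcd p n * d)"
      unfolding n[symmetric] .
    moreover from k have "k < gcd p n" "k' < gcd p n" by simp_all
    ultimately show "k = k'" using mult_mod_mult_inj[OF d] by blast
  qed
qed simp \<comment> \<open>for \<open>p = 1\<close> the index set \<open>{0..<gcd 1 n}\<close> is a singleton\<close>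

theorem theorem6p6:
  fixes p n :: nat and y :: int
  assumes "0 < p" and "0 < n" and "y \<in> dcarrier n"
  defines "c \<equiv> gcd p n"
  defines "d \<equiv> n div c"
  defines "\<alpha> \<equiv> (\<lambda>k::nat. ext_hom (torus_rels p) (torus_gens p) (dtri n) (dtri n)
              (\<lambda>i. (y + int ((i - 1) mod p) * int (k * d)) mod int n))"
  defines "H \<equiv> pointed_qhom (torus_rels p) (torus_gens p) 1 (p + 1) (dcarrier n) (dtri n) y y"
  shows "H = \<alpha> ` {0..<c} \<and> inj_on \<alpha> {0..<c} \<and> card H = c"
proof -
  have \<alpha>: "\<alpha> = (\<lambda>k. torus_ext_hom n p (torus_coloring n p y (int (k * (n div gcd p n)))))"
    unfolding \<alpha>_def d_def c_def by (simp add: torus_coloring_def[abs_def])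
  have "H = \<alpha> ` {0..<c}"
    unfolding H_def \<alpha> c_def by (rule torus_homs_eq_image[OF assms(1-3)])
  moreover have "inj_on \<alpha> {0..<c}"
    unfolding \<alpha> c_def by (rule inj_on_torus_ext_hom_coloring[OF assms(1,2)])
  ultimately show ?thesis by (simp add: card_image)
qed

end
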